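(* Let $n\ge3$ and $k$ an odd integer with $3\le k\le n$. Then $\chi(\mathfrak{g}_{n,k})=n-k+1$.
   Context: $\mathfrak{g}_{n,k}$ is the Lie algebra over a field $K$ of characteristic zero with basis $e_1,\dots,e_n$ whose only nonzero brackets between basis vectors (up to antisymmetry) are $[e_1,e_i]=e_{i+1}$ for $2\le i\le n-1$ and $[e_i,e_{k-i}]=(-1)^ie_n$ for $2\le i\le k-2$. For a Lie algebra $\mathfrak{h}$ and $\ell\in\mathfrak{h}^*$, $\mathfrak{h}(\ell)=\{y\in\mathfrak{h}\mid\ell([x,y])=0\ \forall x\in\mathfrak{h}\}$ and the index is $\chi(\mathfrak{h})=\min_{\ell\in\mathfrak{h}^*}\dim\mathfrak{h}(\ell)$. *)

theory Defs
  imports Complex_Main "HOL-Library.Function_Algebras"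
begin

text \<open>Vectors of K^n are represented as functions nat => K supported on {1..n};
  the basis vector e_i corresponds to the indicator of i.\<close>

definition fscale :: "'a::field \<Rightarrow> (nat \<Rightarrow> 'a) \<Rightarrow> (nat \<Rightarrow> 'a)" where
  "fscale c f = (\<lambda>i. c * f i)"

lemma vector_space_fscale: "vector_space (fscale :: 'a::field \<Rightarrow> _)"
  by unfold_locales (auto simp: fscale_def algebra_simps fun_eq_iff)

definition carrier_n :: "nat \<Rightarrow> (nat \<Rightarrow> 'a::field) set" where
  "carrier_n n = {v. \<forall>i. i \<notin> {1..n} \<longrightarrow> v i = 0}"

text \<open>Coefficient of e_m in [e_i, e_j] for the Lie algebra g_{n,k}:
  [e_1,e_i] = e_{i+1} (2 <= i <= n-1), [e_i,e_{k-i}] = (-1)^i e_n (2 <= i <= k-2),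
  extended by antisymmetry ([e_i,e_1] = - e_{i+1}); all other brackets vanish.\<close>

definition gcoef :: "nat \<Rightarrow> nat \<Rightarrow> nat \<Rightarrow> nat \<Rightarrow> nat \<Rightarrow> 'a::field" where
  "gcoef n k i j m =
     (if i = 1 \<and> 2 \<le> j \<and> j \<le> n - 1 \<and> m = j + 1 then 1 else 0)
   - (if j = 1 \<and> 2 \<le> i \<and> i \<le> n - 1 \<and> m = i + 1 then 1 else 0)
   + (if 2 \<le> i \<and> i \<le> k - 2 \<and> j = k - i \<and> m = n then (-1) ^ i else 0)"

definition gbracket :: "nat \<Rightarrow> nat \<Rightarrow> (nat \<Rightarrow> 'a::field) \<Rightarrow> (nat \<Rightarrow> 'a) \<Rightarrow> (nat \<Rightarrow> 'a)" where
  "gbracket n k x y =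
     (\<lambda>m. if m \<in> {1..n} then (\<Sum>i\<in>{1..n}. \<Sum>j\<in>{1..n}. x i * y j * gcoef n k i j m) else 0)"

definition functionals :: "nat \<Rightarrow> ((nat \<Rightarrow> 'a::field) \<Rightarrow> 'a) set" where
  "functionals n = {l. (\<forall>x\<in>carrier_n n. \<forall>y\<in>carrier_n n. l (x + y) = l x + l y)
                     \<and> (\<forall>c. \<forall>x\<in>carrier_n n. l (fscale c x) = c * l x)}"

definition stab :: "nat \<Rightarrow> nat \<Rightarrow> ((nat \<Rightarrow> 'a::field) \<Rightarrow> 'a) \<Rightarrow> (nat \<Rightarrow> 'a) set" where
  "stab n k l = {y \<in> carrier_n n. \<forall>x\<in>carrier_n n. l (gbracket n k x y) = 0}"

definition gdim :: "(nat \<Rightarrow> 'a::field) set \<Rightarrow> nat" where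
  "gdim S = Vector_Spaces.vector_space.dim fscale S"

definition lie_index :: "nat \<Rightarrow> nat \<Rightarrow> 'a::field itself \<Rightarrow> nat" where
  "lie_index n k (_ :: 'a itself) =
     Min ((\<lambda>l. gdim (stab n k l)) ` (functionals n :: ((nat \<Rightarrow> 'a) \<Rightarrow> 'a) set))"

end

(* The stabiliser g(l) is the kernel of the matrix B(i,j) = l([e_i, e_j]). For j >= k - 1 the
   only nonzero entry of column j is in row 1, since [e_i, e_j] with i >= 2 has an e_n-component
   only for j = k - i <= k - 2. So the n - k + 2 columns j >= k - 1 span at most a line, and the
   kernel always contains n - k + 1 independent vectors. For l = e_k^* + e_n^* the rows k - j
   (2 <= j <= k - 2) and k - 1 force y_j = 0 for j <= k - 2, and row 1 is a nonzero linear form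
   in the remaining coordinates y_(k-1), ..., y_n, so here g(l) has dimension exactly n - k + 1. *)

theory Submission
  imports Defs
begin

interpretation fs: vector_space "fscale :: 'a::field \<Rightarrow> (nat \<Rightarrow> 'a) \<Rightarrow> _"
  by (rule vector_space_fscale)

lemma sum_fun_apply: "(sum f A) x = (\<Sum>i\<in>A. f i x)"
  by (induction A rule: infinite_finite_induct) auto

definition basis_vec :: "nat \<Rightarrow> nat \<Rightarrow> 'a::field" where
  "basis_vec i = (\<lambda>m. if m = i then 1 else 0)"

lemma basis_vec_apply: "basis_vec i m = (if m = i then 1 else 0)"
  by (simp add: basis_vec_def)

lemma basis_vec_in_carrier_n: "i \<in> {1..n} \<Longrightarrow> basis_vec i \<in> carrier_n n"
  by (auto simp: basis_vec_def carrier_n_def)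

lemma subspace_carrier_n: "fs.subspace (carrier_n n)"
  by (auto simp: fs.subspace_def carrier_n_def fscale_def)

lemma carrier_n_eq_sum_basis_vec:
  assumes "v \<in> carrier_n n"
  shows "v = (\<Sum>i\<in>{1..n}. fscale (v i) (basis_vec i))"
proof
  fix m
  have "(\<Sum>i\<in>{1..n}. fscale (v i) (basis_vec i)) m = (\<Sum>i\<in>{1..n}. if m = i then v i else 0)"
    unfolding sum_fun_apply by (rule sum.cong) (auto simp: fscale_def basis_vec_def)
  also have "\<dots> = v m"
    using assms by (auto simp: carrier_n_def)
  finally show "v m = (\<Sum>i\<in>{1..n}. fscale (v i) (basis_vec i)) m" ..
qed

lemma carrier_n_subset_span: "carrier_n n \<subseteq> fs.span (basis_vec ` {1..n})"
proof
  fix v :: "nat \<Rightarrow> 'a" assume "v \<in> carrier_n n"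
  then have "v = (\<Sum>i\<in>{1..n}. fscale (v i) (basis_vec i))"
    by (rule carrier_n_eq_sum_basis_vec)
  also have "\<dots> \<in> fs.span (basis_vec ` {1..n})"
    by (intro fs.span_sum fs.span_scale fs.span_base) auto
  finally show "v \<in> fs.span (basis_vec ` {1..n})" .
qed

lemma dim_le_of_subset_carrier_n:
  assumes "S \<subseteq> carrier_n n"
  shows "fs.dim (S :: (nat \<Rightarrow> 'a::field) set) \<le> n"
proof -
  have "fs.dim S \<le> card (basis_vec ` {1..n} :: (nat \<Rightarrow> 'a) set)"
    using assms carrier_n_subset_span by (intro fs.dim_le_card) auto
  also have "\<dots> \<le> n"
    using card_image_le[of "{1..n}" basis_vec] by simp
  finally show ?thesis .
qed

text \<open>\<open>fs.dim\<close> is \<open>0\<close> on sets without a finite basis, so the bound \<open>S \<subseteq> carrier_n n\<close>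
  is essential.\<close>

lemma card_le_dim_of_independent:
  assumes "S \<subseteq> carrier_n n" "V \<subseteq> S" "fs.independent V"
  shows "card V \<le> fs.dim (S :: (nat \<Rightarrow> 'a::field) set)"
proof -
  obtain B where B: "B \<subseteq> S" "fs.independent B" "S \<subseteq> fs.span B" "card B = fs.dim S"
    using fs.basis_exists by blast
  have "B \<subseteq> fs.span (basis_vec ` {1..n})"
    using B(1) assms(1) carrier_n_subset_span by blast
  then have "finite B"
    using fs.independent_span_bound[of "basis_vec ` {1..n}" B] B(2) by auto
  then show ?thesis
    using fs.independent_span_bound[of B V] assms B by auto
qed

lemma card_le_dim_of_unit_family:
  assumes S: "S \<subseteq> carrier_n n" and "finite J" and w_in: "\<And>j. j \<in> J \<Longrightarrow> w j \<in> S"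
    and w_unit: "\<And>j j'. j \<in> J \<Longrightarrow> j' \<in> J \<Longrightarrow> w j j' = (if j' = j then 1 else (0::'a::field))"
  shows "card J \<le> fs.dim S"
proof -
  have inj: "inj_on w J"
  proof (rule inj_onI)
    fix a b assume "a \<in> J" "b \<in> J" "w a = w b"
    then have "w a a = w b a" by simp
    then show "a = b" using w_unit \<open>a \<in> J\<close> \<open>b \<in> J\<close> by (auto split: if_splits)
  qed
  have "fs.independent (w ` J)"
  proof (rule fs.independent_if_scalars_zero)
    fix f x assume s: "(\<Sum>x\<in>w ` J. fscale (f x) x) = 0" and "x \<in> w ` J"
    then obtain j1 where j1: "j1 \<in> J" "x = w j1" by auto
    have "0 = (\<Sum>x\<in>w ` J. fscale (f x) x) j1"
      using s by simp
    also have "\<dots> = (\<Sum>j\<in>J. f (w j) * w j j1)"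
      by (simp add: sum_fun_apply sum.reindex[OF inj] fscale_def)
    also have "\<dots> = (\<Sum>j\<in>J. if j = j1 then f (w j1) else 0)"
      by (rule sum.cong) (auto simp: w_unit j1)
    also have "\<dots> = f (w j1)"
      using \<open>finite J\<close> j1 by simp
    finally show "f x = 0" using j1 by simp
  qed (use \<open>finite J\<close> in simp)
  moreover have "w ` J \<subseteq> S"
    using w_in by blast
  ultimately have "card (w ` J) \<le> fs.dim S"
    using card_le_dim_of_independent[OF S] by blast
  then show ?thesis
    using card_image[OF inj] by simp
qed

text \<open>For \<open>c j\<^sub>0 \<noteq> 0\<close> the vectors \<open>hyperplane_vec c j\<^sub>0 j\<close>, \<open>j \<in> J - {j\<^sub>0}\<close>, form a basis of
  the hyperplane \<open>\<Sum>j\<in>J. c j * y j = 0\<close> among the vectors supported on \<open>J\<close>.\<close>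

definition hyperplane_vec :: "(nat \<Rightarrow> 'a::field) \<Rightarrow> nat \<Rightarrow> nat \<Rightarrow> nat \<Rightarrow> 'a" where
  "hyperplane_vec c j0 j = basis_vec j - fscale (c j / c j0) (basis_vec j0)"

lemma hyperplane_vec_apply:
  "hyperplane_vec c j0 j m = basis_vec j m - c j / c j0 * basis_vec j0 m"
  by (simp add: hyperplane_vec_def fscale_def)

lemma hyperplane_vec_in_carrier_n:
  "j \<in> {1..n} \<Longrightarrow> j0 \<in> {1..n} \<Longrightarrow> hyperplane_vec c j0 j \<in> carrier_n n"
  unfolding hyperplane_vec_def
  by (intro fs.subspace_diff[OF subspace_carrier_n] fs.subspace_scale[OF subspace_carrier_n]
      basis_vec_in_carrier_n)

lemma sum_mult_hyperplane_vec:
  assumes "finite A" "j \<in> A" "j0 \<in> A"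
  shows "(\<Sum>m\<in>A. B m * hyperplane_vec c j0 j m) = B j - c j / c j0 * B j0"
  using assms
  by (simp add: hyperplane_vec_apply basis_vec_apply right_diff_distrib sum_subtractf
      if_distrib[of "\<lambda>x. B _ * x"] if_distrib[of "\<lambda>x. _ * x"] cong: if_cong)

lemma eq_sum_hyperplane_vec:
  assumes "finite J" "j0 \<in> J" "c j0 \<noteq> 0"
    and supp: "\<And>m. m \<notin> J \<Longrightarrow> y m = 0" and hyp: "(\<Sum>j\<in>J. c j * y j) = 0"
  shows "y = (\<Sum>j\<in>J - {j0}. fscale (y j) (hyperplane_vec c j0 j))"
proof
  fix m
  have rest: "(\<Sum>j\<in>J - {j0}. c j * y j) = - (c j0 * y j0)"
    using hyp sum.remove[OF assms(1,2), of "\<lambda>j. c j * y j"]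
    by (simp add: eq_neg_iff_add_eq_0 add.commute)
  have "(\<Sum>j\<in>J - {j0}. fscale (y j) (hyperplane_vec c j0 j)) m
      = (\<Sum>j\<in>J - {j0}. y j * basis_vec j m) - (\<Sum>j\<in>J - {j0}. c j * y j) / c j0 * basis_vec j0 m"
    by (simp add: sum_fun_apply fscale_def hyperplane_vec_apply algebra_simps sum_subtractf
        sum_distrib_left sum_distrib_right sum_divide_distrib)
  also have "\<dots> = y m"
    using assms rest
    by (cases "m = j0") (auto simp: basis_vec_apply if_distrib[of "times _"] cong: if_cong)
  finally show "y m = (\<Sum>j\<in>J - {j0}. fscale (y j) (hyperplane_vec c j0 j)) m" ..
qed

lemma functional_zero:
  assumes "l \<in> functionals n"
  shows "l 0 = 0"
proof -
  have "l (fscale 0 0) = 0 * l 0"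
    using assms fs.subspace_0[OF subspace_carrier_n] unfolding functionals_def by blast
  then show ?thesis by (simp add: fscale_def zero_fun_def)
qed

lemma functional_sum:
  assumes l: "l \<in> functionals n" and f: "\<And>i. i \<in> A \<Longrightarrow> f i \<in> carrier_n n"
  shows "l (sum f A) = (\<Sum>i\<in>A. l (f i))"
  using f
proof (induction A rule: infinite_finite_induct)
  case (insert x F)
  have "sum f F \<in> carrier_n n"
    using insert by (intro fs.subspace_sum[OF subspace_carrier_n]) auto
  then have "l (f x + sum f F) = l (f x) + l (sum f F)"
    using l insert.prems unfolding functionals_def by blast
  moreover have "l (sum f F) = (\<Sum>i\<in>F. l (f i))"
    using insert by simp
  ultimately show ?case
    by (simp only: sum.insert[OF insert(1,2)])
qed (use functional_zero[OF l] in auto)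

lemma functional_eq_sum_coords:
  assumes l: "l \<in> functionals n" and v: "v \<in> carrier_n n"
  shows "l v = (\<Sum>i\<in>{1..n}. v i * l (basis_vec i))"
proof -
  have "l v = l (\<Sum>i\<in>{1..n}. fscale (v i) (basis_vec i))"
    using carrier_n_eq_sum_basis_vec[OF v] by simp
  also have "\<dots> = (\<Sum>i\<in>{1..n}. l (fscale (v i) (basis_vec i)))"
    using basis_vec_in_carrier_n subspace_carrier_n
    by (intro functional_sum[OF l]) (auto intro: fs.subspace_scale)
  also have "\<dots> = (\<Sum>i\<in>{1..n}. v i * l (basis_vec i))"
  proof (rule sum.cong)
    fix i assume "i \<in> {1..n}"
    then show "l (fscale (v i) (basis_vec i)) = v i * l (basis_vec i)"
      using l basis_vec_in_carrier_n unfolding functionals_def by blast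
  qed simp
  finally show ?thesis .
qed

text \<open>\<open>bracket_coef n k L i j\<close> is the value on \<open>[e\<^sub>i, e\<^sub>j]\<close> of the functional with
  coordinates \<open>L m = l(e\<^sub>m)\<close>.\<close>

definition bracket_coef :: "nat \<Rightarrow> nat \<Rightarrow> (nat \<Rightarrow> 'a::field) \<Rightarrow> nat \<Rightarrow> nat \<Rightarrow> 'a" where
  "bracket_coef n k L i j = (\<Sum>m\<in>{1..n}. gcoef n k i j m * L m)"

lemma sum_indicator_mult:
  "(\<Sum>m\<in>{1..n::nat}. (if P \<and> m = a then c else 0) * (L m :: 'a::field)) =
   (if P \<and> a \<in> {1..n} then c * L a else 0)"
proof -
  have "(\<Sum>m\<in>{1..n}. (if P \<and> m = a then c else 0) * L m) =
        (\<Sum>m\<in>{1..n}. if m = a then (if P then c * L a else 0) else 0)"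
    by (rule sum.cong) auto
  then show ?thesis by simp
qed

lemma bracket_coef_eq:
  assumes "3 \<le> k" "k \<le> n"
  shows "bracket_coef n k L i j =
      (if i = 1 \<and> 2 \<le> j \<and> j \<le> n - 1 then L (j + 1) else 0)
    - (if j = 1 \<and> 2 \<le> i \<and> i \<le> n - 1 then L (i + 1) else 0)
    + (if 2 \<le> i \<and> i \<le> k - 2 \<and> j = k - i then (-1) ^ i * L n else 0)"
proof -
  have "bracket_coef n k L i j =
       (\<Sum>m\<in>{1..n}. (if (i = 1 \<and> 2 \<le> j \<and> j \<le> n - 1) \<and> m = j + 1 then 1 else 0) * L m)
     - (\<Sum>m\<in>{1..n}. (if (j = 1 \<and> 2 \<le> i \<and> i \<le> n - 1) \<and> m = i + 1 then 1 else 0) * L m)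
     + (\<Sum>m\<in>{1..n}. (if (2 \<le> i \<and> i \<le> k - 2 \<and> j = k - i) \<and> m = n then (-1) ^ i else 0) * L m)"
    unfolding bracket_coef_def gcoef_def
    by (simp add: algebra_simps sum.distrib sum_subtractf conj_assoc)
  then show ?thesis
    using assms by (simp only: sum_indicator_mult) auto
qed

lemma bracket_coef_eq_0_if_ge:
  assumes "3 \<le> k" "k \<le> n" "k - 1 \<le> j" "i \<noteq> 1"
  shows "bracket_coef n k L i j = 0"
  using assms by (auto simp: bracket_coef_eq)

lemma functional_gbracket:
  assumes l: "l \<in> functionals n"
  shows "l (gbracket n k x y) =
    (\<Sum>i\<in>{1..n}. x i * (\<Sum>j\<in>{1..n}. bracket_coef n k (\<lambda>m. l (basis_vec m)) i j * y j))"
proof -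
  have "gbracket n k x y \<in> carrier_n n"
    by (auto simp: gbracket_def carrier_n_def)
  then have "l (gbracket n k x y) = (\<Sum>m\<in>{1..n}. gbracket n k x y m * l (basis_vec m))"
    by (rule functional_eq_sum_coords[OF l])
  also have "\<dots> = (\<Sum>m\<in>{1..n}. \<Sum>i\<in>{1..n}. \<Sum>j\<in>{1..n}.
                      x i * (gcoef n k i j m * l (basis_vec m) * y j))"
    by (intro sum.cong) (auto simp: gbracket_def sum_distrib_left mult_ac)
  also have "\<dots> = (\<Sum>i\<in>{1..n}. \<Sum>j\<in>{1..n}. \<Sum>m\<in>{1..n}.
                      x i * (gcoef n k i j m * l (basis_vec m) * y j))"
    by (subst sum.swap) (rule sum.cong[OF refl], rule sum.swap)
  also have "\<dots> = (\<Sum>i\<in>{1..n}. x i * (\<Sum>j\<in>{1..n}. bracket_coef n k (\<lambda>m. l (basis_vec m)) i j * y j))"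
    by (simp add: bracket_coef_def sum_distrib_left sum_distrib_right)
  finally show ?thesis .
qed

lemma stab_iff:
  assumes l: "l \<in> functionals n"
  shows "y \<in> stab n k l \<longleftrightarrow> y \<in> carrier_n n \<and>
    (\<forall>i\<in>{1..n}. (\<Sum>j\<in>{1..n}. bracket_coef n k (\<lambda>m. l (basis_vec m)) i j * y j) = 0)"
    (is "_ \<longleftrightarrow> _ \<and> (\<forall>i\<in>{1..n}. ?row i = 0)")
proof
  assume y: "y \<in> stab n k l"
  have "?row i = 0" if i: "i \<in> {1..n}" for i
  proof -
    have "0 = l (gbracket n k (basis_vec i) y)"
      using y basis_vec_in_carrier_n[OF i] unfolding stab_def by force
    also have "\<dots> = (\<Sum>i'\<in>{1..n}. (if i' = i then ?row i else 0))"
      unfolding functional_gbracket[OF l] by (rule sum.cong) (simp_all add: basis_vec_apply)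
    also have "\<dots> = ?row i"
      using i by simp
    finally show ?thesis ..
  qed
  then show "y \<in> carrier_n n \<and> (\<forall>i\<in>{1..n}. ?row i = 0)"
    using y by (simp add: stab_def)
qed (simp add: stab_def functional_gbracket[OF l])

lemma stab_subset_carrier_n: "stab n k l \<subseteq> carrier_n n"
  by (auto simp: stab_def)

lemma dim_stab_ge:
  fixes l :: "(nat \<Rightarrow> 'a::field) \<Rightarrow> 'a"
  assumes "3 \<le> k" "k \<le> n" and l: "l \<in> functionals n"
  shows "n - k + 1 \<le> fs.dim (stab n k l)"
proof -
  define L where "L = (\<lambda>m. l (basis_vec m))"
  define c where "c j = bracket_coef n k L 1 j" for j
  define J where "J = {k - 1..n}"
  have column: "bracket_coef n k L i j = (if i = 1 then c j else 0)" if "j \<in> J" for i j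
    using that assms bracket_coef_eq_0_if_ge[of k n j i L] by (simp add: c_def J_def)
  \<comment> \<open>If \<open>c\<close> vanishes on \<open>J\<close>, then \<open>c j / c j0 = 0\<close> and the \<open>hyperplane_vec c j0 j\<close> are
    plain basis vectors.\<close>
  obtain j0 where j0: "j0 \<in> J" and c_j0: "c j0 = 0 \<Longrightarrow> \<forall>j\<in>J. c j = 0"
  proof (cases "\<exists>j\<in>J. c j \<noteq> 0")
    case True
    then show ?thesis using that by blast
  next
    case False
    then show ?thesis using that[of n] assms by (auto simp: J_def)
  qed
  have "hyperplane_vec c j0 j \<in> stab n k l" if j: "j \<in> J - {j0}" for j
  proof -
    have "(\<Sum>j'\<in>{1..n}. bracket_coef n k L i j' * hyperplane_vec c j0 j j') = 0" for i
    proof -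
      have "(\<Sum>j'\<in>{1..n}. bracket_coef n k L i j' * hyperplane_vec c j0 j j')
          = bracket_coef n k L i j - c j / c j0 * bracket_coef n k L i j0"
        using j j0 assms by (intro sum_mult_hyperplane_vec) (auto simp: J_def)
      also have "\<dots> = 0"
        using column j j0 c_j0 by auto
      finally show ?thesis .
    qed
    moreover have "hyperplane_vec c j0 j \<in> carrier_n n"
      using j j0 assms by (intro hyperplane_vec_in_carrier_n) (auto simp: J_def)
    ultimately show ?thesis
      unfolding stab_iff[OF l] L_def[symmetric] by blast
  qed
  moreover have "hyperplane_vec c j0 j j' = (if j' = j then 1 else 0)"
    if "j \<in> J - {j0}" "j' \<in> J - {j0}" for j j'
    using that by (auto simp: hyperplane_vec_apply basis_vec_apply)
  ultimately have "card (J - {j0}) \<le> fs.dim (stab n k l)"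
    by (intro card_le_dim_of_unit_family[OF stab_subset_carrier_n, where w = "hyperplane_vec c j0"])
      (auto simp: J_def)
  then show ?thesis
    using j0 assms by (simp add: J_def)
qed

lemma stab_coord_eq_0_if_single_row:
  assumes l: "l \<in> functionals n" and "y \<in> stab n k l" "i \<in> {1..n}" "a \<in> {1..n}" "b \<noteq> 0"
    and row_i: "\<And>j. bracket_coef n k (\<lambda>m. l (basis_vec m)) i j = (if j = a then b else 0)"
  shows "y a = 0"
proof -
  have "(\<Sum>j\<in>{1..n}. bracket_coef n k (\<lambda>m. l (basis_vec m)) i j * y j) = 0"
    using assms(2,3) unfolding stab_iff[OF l] by blast
  moreover have "(\<Sum>j\<in>{1..n}. bracket_coef n k (\<lambda>m. l (basis_vec m)) i j * y j)
      = (\<Sum>j\<in>{1..n}. (if True \<and> j = a then b else 0) * y j)"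
    using row_i by simp
  moreover have "\<dots> = b * y a"
    using assms by (simp only: sum_indicator_mult) simp
  ultimately show ?thesis
    using \<open>b \<noteq> 0\<close> by simp
qed

lemma stab_coord_eq_0_below:
  assumes "3 \<le> k" "k \<le> n" and l: "l \<in> functionals n" and y: "y \<in> stab n k l"
    and "l (basis_vec k) \<noteq> 0" "l (basis_vec n) \<noteq> 0"
    and "\<And>m. 3 \<le> m \<Longrightarrow> m < k \<Longrightarrow> l (basis_vec m) = 0"
    and "j \<notin> {k - 1..n}"
  shows "y j = 0"
proof -
  have "y j = 0" if "2 \<le> j" "j \<le> k - 2" for j
    using that assms
    by (intro stab_coord_eq_0_if_single_row[OF l y, of "k - j" j "(-1) ^ (k - j) * l (basis_vec n)"])
      (auto simp: bracket_coef_eq)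
  moreover have "y 1 = 0"
    using assms
    by (intro stab_coord_eq_0_if_single_row[OF l y, of "k - 1" 1 "- l (basis_vec k)"])
      (auto simp: bracket_coef_eq)
  moreover have "y \<in> carrier_n n"
    using y stab_subset_carrier_n by blast
  ultimately show ?thesis
    using assms by (cases "j = 1"; cases "j \<in> {1..n}") (auto simp: carrier_n_def)
qed

lemma dim_stab_le:
  fixes l :: "(nat \<Rightarrow> 'a::field) \<Rightarrow> 'a"
  assumes "3 \<le> k" "k \<le> n" and l: "l \<in> functionals n"
    and "l (basis_vec k) \<noteq> 0" "l (basis_vec n) \<noteq> 0"
    and "\<And>m. 3 \<le> m \<Longrightarrow> m < k \<Longrightarrow> l (basis_vec m) = 0"
  shows "fs.dim (stab n k l) \<le> n - k + 1"
proof -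
  define c where "c j = bracket_coef n k (\<lambda>m. l (basis_vec m)) 1 j" for j
  define J where "J = {k - 1..n}"
  have "c (k - 1) = l (basis_vec k)"
    using assms by (auto simp: c_def bracket_coef_eq)
  then have c_pivot: "c (k - 1) \<noteq> 0"
    using assms by simp
  have "stab n k l \<subseteq> fs.span (hyperplane_vec c (k - 1) ` (J - {k - 1}))"
  proof
    fix y assume y: "y \<in> stab n k l"
    have supp: "y j = 0" if "j \<notin> J" for j
      using stab_coord_eq_0_below[OF assms(1-3) y assms(4-6)] that by (simp add: J_def)
    have "(\<Sum>j\<in>J. c j * y j) = (\<Sum>j\<in>{1..n}. c j * y j)"
      using assms supp by (intro sum.mono_neutral_left) (auto simp: J_def)
    also have "\<dots> = 0"
      using y assms stab_iff[OF l] by (simp add: c_def)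
    finally have "y = (\<Sum>j\<in>J - {k - 1}. fscale (y j) (hyperplane_vec c (k - 1) j))"
      using c_pivot supp assms by (intro eq_sum_hyperplane_vec) (auto simp: J_def)
    also have "\<dots> \<in> fs.span (hyperplane_vec c (k - 1) ` (J - {k - 1}))"
      by (intro fs.span_sum fs.span_scale fs.span_base) auto
    finally show "y \<in> fs.span (hyperplane_vec c (k - 1) ` (J - {k - 1}))" .
  qed
  then have "fs.dim (stab n k l) \<le> card (hyperplane_vec c (k - 1) ` (J - {k - 1}))"
    by (intro fs.dim_le_card) (auto simp: J_def)
  also have "\<dots> \<le> n - k + 1"
    using card_image_le[of "J - {k - 1}" "hyperplane_vec c (k - 1)"] assms by (simp add: J_def)
  finally show ?thesis .
qed

lemma lie_index_eqI:
  fixes l0 :: "(nat \<Rightarrow> 'a::field) \<Rightarrow> 'a"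
  assumes "\<And>l :: (nat \<Rightarrow> 'a) \<Rightarrow> 'a. l \<in> functionals n \<Longrightarrow> d \<le> fs.dim (stab n k l)"
    and "l0 \<in> functionals n" "fs.dim (stab n k l0) \<le> d"
  shows "lie_index n k TYPE('a) = d"
proof -
  let ?A = "(\<lambda>l. gdim (stab n k l)) ` (functionals n :: ((nat \<Rightarrow> 'a) \<Rightarrow> 'a) set)"
  have "Min ?A = d"
  proof (rule Min_eqI)
    have "?A \<subseteq> {..n}"
      using dim_le_of_subset_carrier_n[OF stab_subset_carrier_n] by (auto simp: gdim_def)
    then show "finite ?A"
      using finite_subset by blast
  next
    show "d \<le> a" if "a \<in> ?A" for a
      using that assms(1) by (auto simp: gdim_def)
  next
    show "d \<in> ?A"
      using assms le_antisym by (fastforce simp: gdim_def)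
  qed
  then show ?thesis
    by (simp add: lie_index_def)
qed

theorem proposition6p7:
  fixes n k :: nat
  assumes "n \<ge> 3" and "odd k" and "3 \<le> k" and "k \<le> n"
  shows "lie_index n k TYPE('a::field_char_0) = n - k + 1"
proof -
  define l0 where "l0 = (\<lambda>v::nat \<Rightarrow> 'a. v k + v n)"
  have l0: "l0 \<in> functionals n"
    by (auto simp: functionals_def l0_def fscale_def algebra_simps)
  have "fs.dim (stab n k l0) \<le> n - k + 1"
    using assms(3,4) by (intro dim_stab_le l0) (auto simp: l0_def basis_vec_apply)
  then show ?thesis
    using dim_stab_ge[OF assms(3,4)] l0 by (intro lie_index_eqI)
qed

end
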